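(* Under Yalcin's semantics, the following formulas are valid for all formulas $\varphi,\alpha,\beta$ of $\mathcal{L}(\Rightarrow)$ and every nonmodal formula $\pi$: A1: $(\varphi\Rightarrow\pi)\leftrightarrow\Box(\varphi\to\pi)$; A2: $(\varphi\Rightarrow(\alpha\wedge\beta))\leftrightarrow((\varphi\Rightarrow\alpha)\wedge(\varphi\Rightarrow\beta))$; A3: $(\varphi\Rightarrow(\alpha\vee\Box\beta))\leftrightarrow((\varphi\Rightarrow\alpha)\vee(\varphi\Rightarrow\beta))$; A4: $(\varphi\Rightarrow(\alpha\vee\Diamond\beta))\leftrightarrow((\varphi\Rightarrow\alpha)\vee\neg(\varphi\Rightarrow\neg\beta))$.
   Context: The language $\mathcal{L}(\Rightarrow)$ is given by $\varphi::= p\mid \neg\varphi\mid (\varphi\wedge\varphi)\mid \Box\varphi \mid (\varphi\Rightarrow\varphi)$, with $p$ ranging over a fixed set of propositional variables; $\vee,\to,\leftrightarrow,\bot$ as usual and $\Diamond\varphi:=\neg\Box\neg\varphi$. A formula is nonmodal if it contains neither $\Rightarrow$ nor $\Box$. A model is $\mathcal{M}=\langle W,V\rangle$ with $W$ nonempty and $V$ assigning each propositional variable a subset of $W$. Yalcin's semantics: for $w\in W$, $X\subseteq W$: $\mathcal{M},w,X\vDash p$ iff $w\in V(p)$; $\neg,\wedge$ Boolean; $\mathcal{M},w,X\vDash\Box\varphi$ iff $\mathcal{M},v,X\vDash\varphi$ for all $v\in X$; $\mathcal{M},w,X\vDash\varphi\Rightarrow\psi$ iff $\mathcal{M},w,\llbracket\varphi\rrbracket^{\mathcal{M},X}\vDash\Box\psi$,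 where $\llbracket\varphi\rrbracket^{\mathcal{M},X}=\{v\in X\mid\mathcal{M},v,X\vDash\varphi\}$. A formula is valid iff it is true at every $w\in W$ relative to every $X\subseteq W$ in every model. *)

theory Defs
  imports Main
begin

datatype 'p fm =
    Var 'p
  | Neg "'p fm"
  | Conj "'p fm" "'p fm"
  | Box "'p fm"
  | Imp "'p fm" "'p fm"   (* the indicative conditional \<Rightarrow> *)

definition Disj :: "'p fm \<Rightarrow> 'p fm \<Rightarrow> 'p fm" where
  "Disj a b = Neg (Conj (Neg a) (Neg b))"
definition Impl :: "'p fm \<Rightarrow> 'p fm \<Rightarrow> 'p fm" where
  "Impl a b = Neg (Conj a (Neg b))"
definition Iff :: "'p fm \<Rightarrow> 'p fm \<Rightarrow> 'p fm" where
  "Iff a b = Conj (Impl a b) (Impl b a)"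
definition Dia :: "'p fm \<Rightarrow> 'p fm" where
  "Dia a = Neg (Box (Neg a))"

fun nonmodal :: "'p fm \<Rightarrow> bool" where
  "nonmodal (Var p) = True"
| "nonmodal (Neg a) = nonmodal a"
| "nonmodal (Conj a b) = (nonmodal a \<and> nonmodal b)"
| "nonmodal (Box a) = False"
| "nonmodal (Imp a b) = False"

fun sat :: "'w set \<Rightarrow> ('p \<Rightarrow> 'w set) \<Rightarrow> 'w \<Rightarrow> 'w set \<Rightarrow> 'p fm \<Rightarrow> bool" where
  "sat W V w X (Var p) = (w \<in> V p)"
| "sat W V w X (Neg a) = (\<not> sat W V w X a)"
| "sat W V w X (Conj a b) = (sat W V w X a \<and> sat W V w X b)"
| "sat W V w X (Box a) = (\<forall>v\<in>X. sat W V v X a)"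
| "sat W V w X (Imp a b) =
     (let Y = {v \<in> X. sat W V v X a} in \<forall>v\<in>Y. sat W V v Y b)"

definition is_model :: "'w set \<Rightarrow> ('p \<Rightarrow> 'w set) \<Rightarrow> bool" where
  "is_model W V \<longleftrightarrow> W \<noteq> {} \<and> (\<forall>p. V p \<subseteq> W)"

definition valid :: "'w itself \<Rightarrow> 'p fm \<Rightarrow> bool" where
  "valid _ phi \<longleftrightarrow> (\<forall>(W::'w set) V w X. is_model W V \<and> w \<in> W \<and> X \<subseteq> W \<longrightarrow> sat W V w X phi)"

end

theory Submission
  imports Defs
begin

text \<open>A conditional \<open>\<phi> \<Rightarrow> \<psi>\<close> is the necessity of \<open>\<psi>\<close> in the information state
  \<open>X\<close> updated with \<open>\<phi>\<close>. Hence it suffices to study \<open>\<box>\<close> in a fixed state. There a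
  nonmodal formula does not see the state at all, so \<open>\<box>\<close> commutes with restricting the
  state (A1); \<open>\<box>\<close> distributes over conjunction (A2); and a modal formula \<open>\<box>\<beta>\<close> or
  \<open>\<diamond>\<beta>\<close> has the same truth value at every world of the state, so it can be pulled out
  of the scope of \<open>\<box>\<close> as a disjunct (A3, A4).\<close>

lemma sat_Impl [simp]: "sat W V w X (Impl a b) \<longleftrightarrow> (sat W V w X a \<longrightarrow> sat W V w X b)"
  by (simp add: Impl_def)

lemma sat_Disj [simp]: "sat W V w X (Disj a b) \<longleftrightarrow> sat W V w X a \<or> sat W V w X b"
  by (simp add: Disj_def)

lemma sat_Iff [simp]: "sat W V w X (Iff a b) \<longleftrightarrow> (sat W V w X a \<longleftrightarrow> sat W V w X b)"
  by (auto simp add: Iff_def)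

lemma sat_Dia [simp]: "sat W V w X (Dia a) \<longleftrightarrow> (\<exists>v\<in>X. sat W V v X a)"
  by (simp add: Dia_def)

lemma sat_Imp_eq_Box:
  "sat W V w X (Imp a b) \<longleftrightarrow> sat W V w {v \<in> X. sat W V v X a} (Box b)"
  by (simp add: Let_def)

lemma valid_Iff_if_equivalent:
  assumes "\<And>(W :: 'w set) V w X. sat W V w X a \<longleftrightarrow> sat W V w X b"
  shows "valid TYPE('w) (Iff a b)"
  using assms by (simp add: valid_def)

lemma nonmodal_sat_state_indep:
  "nonmodal a \<Longrightarrow> sat W V w X a \<longleftrightarrow> sat W V w Y a"
  by (induction a) auto

lemma sat_Box_restrict_nonmodal:
  assumes "nonmodal b"
  shows "sat W V w {v \<in> X. sat W V v X a} (Box b) \<longleftrightarrow> sat W V w X (Box (Impl a b))"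
  using nonmodal_sat_state_indep [OF assms, of W V _ "{v \<in> X. sat W V v X a}" X] by auto

lemma sat_Box_Conj: "sat W V w X (Box (Conj a b)) \<longleftrightarrow> sat W V w X (Box a) \<and> sat W V w X (Box b)"
  by auto

lemma sat_Box_Disj_Box:
  "sat W V w X (Box (Disj a (Box b))) \<longleftrightarrow> sat W V w X (Box a) \<or> sat W V w X (Box b)"
  by auto

lemma sat_Box_Disj_Dia:
  "sat W V w X (Box (Disj a (Dia b))) \<longleftrightarrow> sat W V w X (Box a) \<or> sat W V w X (Dia b)"
  by auto

lemma valid_Imp_nonmodal:
  "nonmodal \<pi> \<Longrightarrow> valid TYPE('w) (Iff (Imp \<phi> \<pi>) (Box (Impl \<phi> \<pi>)))"
  by (intro valid_Iff_if_equivalent) (simp only: sat_Imp_eq_Box sat_Box_restrict_nonmodal)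

lemma valid_Imp_Conj:
  "valid TYPE('w) (Iff (Imp \<phi> (Conj \<alpha> \<beta>)) (Conj (Imp \<phi> \<alpha>) (Imp \<phi> \<beta>)))"
  by (intro valid_Iff_if_equivalent) (simp only: sat_Imp_eq_Box sat_Box_Conj sat.simps(3))

lemma valid_Imp_Disj_Box:
  "valid TYPE('w) (Iff (Imp \<phi> (Disj \<alpha> (Box \<beta>))) (Disj (Imp \<phi> \<alpha>) (Imp \<phi> \<beta>)))"
  by (intro valid_Iff_if_equivalent) (simp only: sat_Imp_eq_Box sat_Box_Disj_Box sat_Disj)

lemma valid_Imp_Disj_Dia:
  "valid TYPE('w) (Iff (Imp \<phi> (Disj \<alpha> (Dia \<beta>))) (Disj (Imp \<phi> \<alpha>) (Neg (Imp \<phi> (Neg \<beta>)))))"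
  by (intro valid_Iff_if_equivalent)
    (simp only: sat_Imp_eq_Box sat_Box_Disj_Dia sat_Disj sat.simps(2), simp add: Dia_def)

theorem lemma3:
  fixes \<phi> \<alpha> \<beta> \<pi> :: "'p fm"
  assumes "nonmodal \<pi>"
  shows "valid TYPE('w) (Iff (Imp \<phi> \<pi>) (Box (Impl \<phi> \<pi>)))
       \<and> valid TYPE('w) (Iff (Imp \<phi> (Conj \<alpha> \<beta>)) (Conj (Imp \<phi> \<alpha>) (Imp \<phi> \<beta>)))
       \<and> valid TYPE('w) (Iff (Imp \<phi> (Disj \<alpha> (Box \<beta>))) (Disj (Imp \<phi> \<alpha>) (Imp \<phi> \<beta>)))
       \<and> valid TYPE('w) (Iff (Imp \<phi> (Disj \<alpha> (Dia \<beta>))) (Disj (Imp \<phi> \<alpha>) (Neg (Imp \<phi> (Neg \<beta>)))))"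
  using valid_Imp_nonmodal [OF assms] valid_Imp_Conj valid_Imp_Disj_Box valid_Imp_Disj_Dia
  by blast

end
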